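(* Let $m\ge2$ and let $V\subseteq k[\beta]$ be a $k$-subspace with $(\beta^m)\subseteq V$. Let $(p_i)_{i\ge1}$ be a $k$-basis of $V$ whose orders $\nu_i=\mathrm{ord}\,p_i$ satisfy $0\le\nu_1<\nu_2<\cdots$. Then $$\dim_k\mathcal D'_m(V)\ge 2m-\max(1,\nu_1,m-\nu_2+1)-\max(1,m-\nu_1).$$ In particular, $\mathcal D'_m(V)=0$ implies $\nu_1=0$ and $\nu_2=1$.
   Context: $k$ is a field; the order $\mathrm{ord}\,p$ of a nonzero polynomial $p\in k[\beta]$ is the smallest exponent of $\beta$ with nonzero coefficient. A first order differential operator $A+B\frac{d}{d\beta}$ ($A,B\in k[\beta]$) acts by $v\mapsto Av+Bv'$. $\mathcal D'_m(V)$ is the quotient of the Lie algebra $\{\Theta=A+B\frac{d}{d\beta}: A,B\in k[\beta],\ B(0)=0,\ \Theta(V)\subseteq V\}$ by $\{A+B\frac{d}{d\beta}: A\in k+(\beta^m),\ B\in(\beta^m)\}$. (For $\Lambda=kQ/I(n;n',n'';V)$ with $m=\min(n',n'')$, this is the Lie algebra $\mathcal D'(\Lambda)$, and $\dim\mathrm{HH}^1(\Lambda)=\dim\mathcal D'(\Lambda)+n-m+c$.) *)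

theory Defs
  imports "HOL-Computational_Algebra.Polynomial" "HOL-Library.Extended_Nat"
begin

text \<open>The variable beta is the polynomial [:0,1:].\<close>

definition ord :: "'a::zero poly \<Rightarrow> nat" where
  "ord p = (LEAST i. coeff p i \<noteq> 0)"

definition beta_ideal :: "nat \<Rightarrow> 'a::field poly set" where
  "beta_ideal m = {p. [:0, 1:] ^ m dvd p}"

definition poly_subspace :: "'a::field poly set \<Rightarrow> bool" where
  "poly_subspace V \<longleftrightarrow> 0 \<in> V \<and> (\<forall>x\<in>V. \<forall>y\<in>V. x + y \<in> V)
     \<and> (\<forall>c. \<forall>x\<in>V. smult c x \<in> V)"

definition is_basis_from1 :: "(nat \<Rightarrow> 'a::field poly) \<Rightarrow> 'a poly set \<Rightarrow> bool" where
  "is_basis_from1 p V \<longleftrightarrow>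
     (\<forall>i\<ge>1. p i \<in> V) \<and>
     (\<forall>F c. finite F \<longrightarrow> F \<subseteq> {1..} \<longrightarrow> (\<Sum>i\<in>F. smult (c i) (p i)) = 0 \<longrightarrow> (\<forall>i\<in>F. c i = 0)) \<and>
     (\<forall>v\<in>V. \<exists>F c. finite F \<and> F \<subseteq> {1..} \<and> v = (\<Sum>i\<in>F. smult (c i) (p i)))"

definition diff_op :: "'a::field poly \<Rightarrow> 'a poly \<Rightarrow> 'a poly \<Rightarrow> 'a poly" where
  "diff_op A B = (\<lambda>v. A * v + B * pderiv v)"

definition D_ops :: "'a::field poly set \<Rightarrow> ('a poly \<Rightarrow> 'a poly) set" where
  "D_ops V = {diff_op A B | A B. poly B 0 = 0 \<and> diff_op A B ` V \<subseteq> V}"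

definition N_ops :: "nat \<Rightarrow> ('a::field poly \<Rightarrow> 'a poly) set" where
  "N_ops m = {diff_op A B | A B. (\<exists>c. A - [:c:] \<in> beta_ideal m) \<and> B \<in> beta_ideal m}"

definition indep_mod :: "('a::field poly \<Rightarrow> 'a poly) set \<Rightarrow> ('a poly \<Rightarrow> 'a poly) set
    \<Rightarrow> (nat \<Rightarrow> 'a poly \<Rightarrow> 'a poly) \<Rightarrow> nat \<Rightarrow> bool" where
  "indep_mod L N T n \<longleftrightarrow> (\<forall>i<n. T i \<in> L) \<and>
     (\<forall>c. (\<lambda>v. \<Sum>i<n. smult (c i) (T i v)) \<in> N \<longrightarrow> (\<forall>i<n. c i = 0))"

text \<open>Dimension of the quotient L/N (possibly infinite): supremum of the sizes of
  families in L linearly independent modulo N.\<close>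
definition quot_dim :: "('a::field poly \<Rightarrow> 'a poly) set \<Rightarrow> ('a poly \<Rightarrow> 'a poly) set \<Rightarrow> enat" where
  "quot_dim L N = (SUP n \<in> {n. \<exists>T. indep_mod L N T n}. enat n)"

definition dim_Dprime :: "nat \<Rightarrow> 'a::field poly set \<Rightarrow> enat" where
  "dim_Dprime m V = quot_dim (D_ops V) (N_ops m)"

end

(* Let nu1 < nu2 be the orders of p1 and p2. Every element of V has order at least nu1, so
   multiplication by beta^e, for max(1, m - nu1) <= e < m, maps V into (beta^m) and is a
   nonzero class in D'_m(V). The operator beta^s (p1 d/dbeta - p1') kills p1 and maps every
   other basis element, of order at least nu2, into (beta^(s + nu1 + nu2 - 1)); take
   max(1, nu1, m + 1 - nu2) <= s + nu1 < m. Modulo N_ops m the first family is detected by the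
   coefficients of A in degrees 1, ..., m - 1 and the second by the coefficients of
   B = beta^s p1 below degree m, so together they are independent, which gives the bound.
   If there are no such operators at all, the two ranges are empty, forcing nu1 = 0, nu2 = 1. *)

theory Submission
  imports Defs
begin

lemma sum_lessThan_add:
  fixes f :: "nat \<Rightarrow> 'b::comm_monoid_add"
  shows "(\<Sum>k<n1 + n2. f k) = (\<Sum>k<n1. f k) + (\<Sum>j<n2. f (n1 + j))"
  by (induction n2) (simp_all add: add.assoc)

lemma coeff_sum_monom_shift:
  "j < n \<Longrightarrow> coeff (\<Sum>i<n. monom (c i) (b + i)) (b + j) = c j"
  by (simp add: coeff_sum)

lemma beta_ideal_iff_monom_dvd: "(q::'a::field poly) \<in> beta_ideal m \<longleftrightarrow> monom 1 m dvd q"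
  by (simp add: beta_ideal_def monom_altdef)

lemma beta_ideal_iff_coeff: "(q::'a::field poly) \<in> beta_ideal m \<longleftrightarrow> (\<forall>k<m. coeff q k = 0)"
  by (simp add: beta_ideal_iff_monom_dvd monom_1_dvd_iff')

lemma mem_beta_ideal_if_monom_dvd:
  "monom 1 a dvd (f::'a::field poly) \<Longrightarrow> m \<le> a \<Longrightarrow> f \<in> beta_ideal m"
  by (simp add: beta_ideal_iff_coeff monom_1_dvd_iff')

lemma ord_eq_order_0:
  assumes "(q::'a::field poly) \<noteq> 0"
  shows "ord q = order 0 q"
  unfolding ord_def
proof (rule Least_equality)
  have "\<not> monom 1 (Suc (order 0 q)) dvd q" and "monom 1 (order 0 q) dvd q"
    using assms by (simp_all add: monom_1_dvd_iff)
  then show "coeff q (order 0 q) \<noteq> 0"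
    by (auto simp: monom_1_dvd_iff' less_Suc_eq)
  show "order 0 q \<le> i" if "coeff q i \<noteq> 0" for i
    using that \<open>monom 1 (order 0 q) dvd q\<close> by (meson monom_1_dvd_iff' not_le)
qed

lemma monom_ord_dvd: "(q::'a::field poly) \<noteq> 0 \<Longrightarrow> monom 1 (ord q) dvd q"
  by (simp add: ord_eq_order_0 monom_1_dvd_iff)

lemma monom_1_dvd_mono: "monom 1 a dvd (f::'a::field poly) \<Longrightarrow> b \<le> a \<Longrightarrow> monom 1 b dvd f"
  by (simp add: monom_1_dvd_iff')

lemma monom_1_dvd_mult:
  "monom 1 a dvd (f::'a::field poly) \<Longrightarrow> monom 1 b dvd g \<Longrightarrow> monom 1 (a + b) dvd f * g"
  using mult_dvd_mono[of "monom 1 a" f "monom 1 b" g] by (simp add: mult_monom)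

lemma monom_1_dvd_pderiv: "monom 1 a dvd (f::'a::field poly) \<Longrightarrow> monom 1 (a - 1) dvd pderiv f"
  by (simp add: monom_1_dvd_iff' coeff_pderiv)

lemma monom_1_dvd_wronskian:
  fixes f g :: "'a::field poly"
  assumes "monom 1 a dvd f" "monom 1 b dvd g"
  shows "monom 1 (a + b - 1) dvd f * pderiv g - pderiv f * g"
proof (rule dvd_diff)
  show "monom 1 (a + b - 1) dvd f * pderiv g"
    using monom_1_dvd_mult[OF assms(1) monom_1_dvd_pderiv[OF assms(2)]]
    by (rule monom_1_dvd_mono) simp
  show "monom 1 (a + b - 1) dvd pderiv f * g"
    using monom_1_dvd_mult[OF monom_1_dvd_pderiv[OF assms(1)] assms(2)]
    by (rule monom_1_dvd_mono) simp
qed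

lemma monom_1_dvd_mult_cancel:
  fixes q r :: "'a::field poly"
  assumes "q \<noteq> 0" "monom 1 m dvd r * q"
  shows "monom 1 (m - ord q) dvd r"
proof (cases "r = 0")
  case False
  with assms have "m \<le> order 0 r + order 0 q"
    by (simp add: monom_1_dvd_iff order_mult)
  with False show ?thesis
    using assms(1) by (simp add: monom_1_dvd_iff ord_eq_order_0)
qed simp

lemma diff_op_inject: "diff_op A B = diff_op A' B' \<longleftrightarrow> A = A' \<and> B = B'"
proof
  assume eq: "diff_op A B = diff_op A' B'"
  have "A = A'" using fun_cong[OF eq, of 1] by (simp add: diff_op_def)
  moreover have "A * [:0, 1:] + B = A' * [:0, 1:] + B'"
    using fun_cong[OF eq, of "[:0, 1:]"] by (simp add: diff_op_def pderiv_pCons)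
  ultimately show "A = A' \<and> B = B'" by simp
qed simp

lemma diff_op_in_D_ops: "poly B 0 = 0 \<Longrightarrow> diff_op A B ` V \<subseteq> V \<Longrightarrow> diff_op A B \<in> D_ops V"
  unfolding D_ops_def by (intro CollectI exI[of _ A] exI[of _ B] conjI refl)

lemma diff_op_sum:
  "finite F \<Longrightarrow> diff_op A B (\<Sum>i\<in>F. smult (c i) (q i)) = (\<Sum>i\<in>F. smult (c i) (diff_op A B (q i)))"
  by (induction F rule: finite_induct)
    (simp_all add: diff_op_def pderiv_add pderiv_smult distrib_left add_ac smult_add_right)

lemma sum_diff_op:
  "(\<lambda>v. \<Sum>k<n. smult (c k) (diff_op (A k) (B k) v))
     = diff_op (\<Sum>k<n. smult (c k) (A k)) (\<Sum>k<n. smult (c k) (B k))"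
  by (rule ext) (simp add: diff_op_def sum_distrib_right smult_add_right sum.distrib)

lemma poly_subspace_sum:
  assumes "poly_subspace V"
  shows "finite F \<Longrightarrow> \<forall>i\<in>F. q i \<in> V \<Longrightarrow> (\<Sum>i\<in>F. smult (c i) (q i)) \<in> V"
  by (induction F rule: finite_induct) (use assms in \<open>simp_all add: poly_subspace_def\<close>)

lemma is_basis_from1_nonzero:
  assumes "is_basis_from1 p V" "1 \<le> i"
  shows "p i \<noteq> 0"
proof
  assume "p i = 0"
  with assms have "(1::'a) = 0"
    unfolding is_basis_from1_def by (auto dest!: spec[of _ "{i}"] spec[of _ "\<lambda>_. 1"])
  then show False by simp
qed

lemma is_basis_from1_spans:
  "is_basis_from1 p V \<Longrightarrow> v \<in> V \<Longrightarrow> \<exists>F c. finite F \<and> F \<subseteq> {1..} \<and> v = (\<Sum>i\<in>F. smult (c i) (p i))"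
  by (simp add: is_basis_from1_def)

lemma diff_op_image_subset_if_basis:
  assumes "poly_subspace V" "is_basis_from1 p V" "\<And>i. 1 \<le> i \<Longrightarrow> diff_op A B (p i) \<in> V"
  shows "diff_op A B ` V \<subseteq> V"
proof (rule image_subsetI)
  fix v assume "v \<in> V"
  then obtain F c where F: "finite F" "F \<subseteq> {1..}" "v = (\<Sum>i\<in>F. smult (c i) (p i))"
    using is_basis_from1_spans[OF assms(2)] by blast
  have "\<forall>i\<in>F. diff_op A B (p i) \<in> V" using F(2) assms(3) by auto
  then show "diff_op A B v \<in> V"
    using F by (simp add: diff_op_sum poly_subspace_sum[OF assms(1)])
qed

lemma monom_1_dvd_if_basis:
  assumes "is_basis_from1 p V" "\<And>i. 1 \<le> i \<Longrightarrow> monom 1 \<nu> dvd p i" "v \<in> V"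
  shows "monom 1 \<nu> dvd v"
proof -
  obtain F c where "F \<subseteq> {1..}" "v = (\<Sum>i\<in>F. smult (c i) (p i))"
    using is_basis_from1_spans[OF assms(1,3)] by blast
  with assms(2) show ?thesis by (auto intro!: dvd_sum dvd_smult)
qed

definition mult_op :: "nat \<Rightarrow> 'a::field poly \<Rightarrow> 'a poly" where
  "mult_op e = diff_op (monom 1 e) 0"

definition wronski_op :: "'a::field poly \<Rightarrow> nat \<Rightarrow> 'a poly \<Rightarrow> 'a poly" where
  "wronski_op q s = diff_op (- (monom 1 s * pderiv q)) (monom 1 s * q)"

lemma wronski_op_apply: "wronski_op q s v = monom 1 s * (q * pderiv v - pderiv q * v)"
  by (simp add: wronski_op_def diff_op_def algebra_simps)

lemma wronski_op_self [simp]: "wronski_op q s q = 0"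
  by (simp add: wronski_op_apply mult.commute[of q])

lemma mult_op_in_D_ops:
  assumes "beta_ideal m \<subseteq> V" "\<forall>v\<in>V. monom 1 \<nu> dvd v" "m \<le> e + \<nu>"
  shows "mult_op e \<in> D_ops V"
proof -
  have "monom 1 e * v \<in> V" if "v \<in> V" for v
  proof -
    have "monom 1 (e + \<nu>) dvd monom 1 e * v"
      using monom_1_dvd_mult[OF dvd_refl] assms(2) that by blast
    then show ?thesis
      using assms(1,3) mem_beta_ideal_if_monom_dvd by blast
  qed
  then have "diff_op (monom 1 e) 0 ` V \<subseteq> V"
    by (auto simp: diff_op_def)
  then show ?thesis
    unfolding mult_op_def by (rule diff_op_in_D_ops[rotated]) simp
qed

lemma wronski_op_in_D_ops:
  assumes "poly_subspace V" "beta_ideal m \<subseteq> V" "is_basis_from1 p V"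
    and "monom 1 \<mu> dvd p 1" "\<And>i. 2 \<le> i \<Longrightarrow> monom 1 \<nu> dvd p i"
    and "0 < s + \<mu>" "m < s + \<mu> + \<nu>"
  shows "wronski_op (p 1) s \<in> D_ops V"
proof -
  have "wronski_op (p 1) s (p i) \<in> V" if "1 \<le> i" for i
  proof (cases "i = 1")
    case True
    then show ?thesis
      using assms(1) by (simp add: poly_subspace_def)
  next
    case False
    with that have "monom 1 (s + (\<mu> + \<nu> - 1)) dvd wronski_op (p 1) s (p i)"
      unfolding wronski_op_apply
      by (intro monom_1_dvd_mult[OF dvd_refl] monom_1_dvd_wronskian assms(4,5)) simp
    then have "wronski_op (p 1) s (p i) \<in> beta_ideal m"
      by (rule mem_beta_ideal_if_monom_dvd) (use assms(7) in linarith)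
    then show ?thesis
      using assms(2) by blast
  qed
  then have "diff_op (- (monom 1 s * pderiv (p 1))) (monom 1 s * p 1) ` V \<subseteq> V"
    by (intro diff_op_image_subset_if_basis[OF assms(1,3)]) (simp add: wronski_op_def)
  moreover have "poly (monom 1 s * p 1) 0 = 0"
  proof -
    have "monom 1 s * p 1 \<in> beta_ideal 1"
      by (rule mem_beta_ideal_if_monom_dvd[OF monom_1_dvd_mult[OF dvd_refl assms(4)]])
        (use assms(6) in linarith)
    then show ?thesis
      by (simp add: beta_ideal_iff_coeff poly_0_coeff_0)
  qed
  ultimately show ?thesis
    unfolding wronski_op_def by (rule diff_op_in_D_ops[rotated])
qed

lemma indep_mod_UNIV_imp:
  "indep_mod UNIV N T n \<Longrightarrow> (\<And>i. i < n \<Longrightarrow> T i \<in> L) \<Longrightarrow> indep_mod L N T n"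
  by (simp add: indep_mod_def)

lemma quot_dim_ge: "indep_mod L N T n \<Longrightarrow> enat n \<le> quot_dim L N"
  unfolding quot_dim_def by (rule SUP_upper) blast

lemma sum_mult_wronski_ops:
  "(\<lambda>v. \<Sum>k<n1 + n2. smult (c k)
        ((if k < n1 then mult_op (a + k) else wronski_op q (s + (k - n1))) v))
     = diff_op ((\<Sum>k<n1. monom (c k) (a + k)) - (\<Sum>j<n2. monom (c (n1 + j)) (s + j)) * pderiv q)
               ((\<Sum>j<n2. monom (c (n1 + j)) (s + j)) * q)"
proof -
  have "(if k < n1 then mult_op (a + k) else wronski_op q (s + (k - n1)))
      = diff_op (if k < n1 then monom 1 (a + k) else - (monom 1 (s + (k - n1)) * pderiv q))
                (if k < n1 then 0 else monom 1 (s + (k - n1)) * q)" for k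
    by (simp add: mult_op_def wronski_op_def)
  then show ?thesis
    by (simp only: sum_diff_op)
      (simp add: sum_lessThan_add smult_monom sum_distrib_right smult_monom_mult sum_negf)
qed

lemma indep_mod_mult_wronski_ops:
  fixes q :: "'a::field poly"
  assumes "q \<noteq> 0" "1 \<le> a" "n1 \<le> m - a" "n2 \<le> m - (s + ord q)"
  shows "indep_mod UNIV (N_ops m)
           (\<lambda>k. if k < n1 then mult_op (a + k) else wronski_op q (s + (k - n1))) (n1 + n2)"
  unfolding indep_mod_def
proof (intro conjI allI impI)
  fix c :: "nat \<Rightarrow> 'a"
  define P where "P = (\<Sum>k<n1. monom (c k) (a + k))"
  define Q where "Q = (\<Sum>j<n2. monom (c (n1 + j)) (s + j))"
  assume "(\<lambda>v. \<Sum>k<n1 + n2. smult (c k)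
            ((if k < n1 then mult_op (a + k) else wronski_op q (s + (k - n1))) v)) \<in> N_ops m"
  then obtain c0 where A: "P - Q * pderiv q - [:c0:] \<in> beta_ideal m" and B: "Q * q \<in> beta_ideal m"
    unfolding sum_mult_wronski_ops N_ops_def P_def Q_def by (auto simp: diff_op_inject)
  have cQ: "c (n1 + j) = 0" if "j < n2" for j
  proof -
    have "monom 1 (m - ord q) dvd Q"
      using B assms(1) by (simp add: beta_ideal_iff_monom_dvd monom_1_dvd_mult_cancel)
    moreover have "s + j < m - ord q" using that assms(4) by linarith
    ultimately have "coeff Q (s + j) = 0"
      by (simp add: monom_1_dvd_iff')
    then show ?thesis
      using coeff_sum_monom_shift[OF that, of "\<lambda>j. c (n1 + j)"] by (simp add: Q_def)
  qed
  have cP: "c k = 0" if "k < n1" for k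
  proof -
    have "Q = 0" unfolding Q_def using cQ by simp
    then have "coeff (P - [:c0:]) (a + k) = 0"
      using A that assms(3) by (simp add: beta_ideal_iff_coeff)
    with that assms(2) show ?thesis
      by (simp add: P_def coeff_sum_monom_shift coeff_pCons split: nat.split)
  qed
  show "c k = 0" if "k < n1 + n2" for k
    using that cP cQ[of "k - n1"] by (cases "k < n1") auto
qed simp

lemma monom_ord_dvd_basis:
  assumes "is_basis_from1 p V" "\<And>i j. 1 \<le> i \<Longrightarrow> i < j \<Longrightarrow> ord (p i) < ord (p j)"
    and "1 \<le> j" "j \<le> i"
  shows "monom 1 (ord (p j)) dvd p i"
proof (rule monom_1_dvd_mono)
  show "monom 1 (ord (p i)) dvd p i"
    using assms(1,3,4) by (simp add: monom_ord_dvd is_basis_from1_nonzero)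
  show "ord (p j) \<le> ord (p i)"
    using assms(2-4) by (cases "j = i") (auto intro: less_imp_le)
qed

lemma dim_Dprime_ge:
  assumes "poly_subspace V" "beta_ideal m \<subseteq> V" "is_basis_from1 p V"
    and "\<And>i j. 1 \<le> i \<Longrightarrow> i < j \<Longrightarrow> ord (p i) < ord (p j)"
  shows "enat ((m - max 1 (m - ord (p 1))) + (m - max 1 (max (ord (p 1)) (m + 1 - ord (p 2)))))
           \<le> dim_Dprime m V"
proof -
  define \<nu>1 where "\<nu>1 = ord (p 1)"
  define \<nu>2 where "\<nu>2 = ord (p 2)"
  define a where "a = max 1 (m - \<nu>1)"
  define b where "b = max 1 (max \<nu>1 (m + 1 - \<nu>2))"
  define T where "T k = (if k < m - a then mult_op (a + k) else wronski_op (p 1) (b - \<nu>1 + (k - (m - a))))"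
    for k
  have dvd_p: "monom 1 (ord (p j)) dvd p i" if "1 \<le> j" "j \<le> i" for i j
    using monom_ord_dvd_basis[OF assms(3,4) that] .
  have "T k \<in> D_ops V" for k
  proof (cases "k < m - a")
    case True
    have "\<forall>v\<in>V. monom 1 \<nu>1 dvd v"
      using monom_1_dvd_if_basis[OF assms(3) dvd_p[of 1]] by (simp add: \<nu>1_def)
    with True show ?thesis
      by (simp add: T_def mult_op_in_D_ops[OF assms(2)] a_def)
  next
    case False
    have "\<nu>1 < \<nu>2" using assms(4)[of 1 2] by (simp add: \<nu>1_def \<nu>2_def)
    then have "wronski_op (p 1) (b - \<nu>1 + (k - (m - a))) \<in> D_ops V"
      by (intro wronski_op_in_D_ops[OF assms(1-3) dvd_p[of 1 1] dvd_p[of 2]])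
        (auto simp: \<nu>1_def \<nu>2_def b_def)
    with False show ?thesis by (simp add: T_def)
  qed
  moreover have "indep_mod UNIV (N_ops m) T ((m - a) + (m - b))"
    unfolding T_def \<nu>1_def
    by (rule indep_mod_mult_wronski_ops)
      (auto simp: is_basis_from1_nonzero[OF assms(3)] a_def b_def \<nu>1_def)
  ultimately have "indep_mod (D_ops V) (N_ops m) T ((m - a) + (m - b))"
    by (blast intro: indep_mod_UNIV_imp)
  then show ?thesis
    unfolding dim_Dprime_def a_def b_def \<nu>1_def \<nu>2_def by (rule quot_dim_ge)
qed

theorem mainTheorem16:
  fixes m :: nat and V :: "'a::field poly set" and p :: "nat \<Rightarrow> 'a poly"
  assumes "m \<ge> 2"
    and "poly_subspace V"
    and "beta_ideal m \<subseteq> V"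
    and "is_basis_from1 p V"
    and "\<And>i j. 1 \<le> i \<Longrightarrow> i < j \<Longrightarrow> ord (p i) < ord (p j)"
  shows "enat (nat (2 * int m - max 1 (max (int (ord (p 1))) (int m - int (ord (p 2)) + 1))
                 - max 1 (int m - int (ord (p 1))))) \<le> dim_Dprime m V
         \<and> (dim_Dprime m V = 0 \<longrightarrow> ord (p 1) = 0 \<and> ord (p 2) = 1)"
proof -
  define \<nu>1 where "\<nu>1 = ord (p 1)"
  define \<nu>2 where "\<nu>2 = ord (p 2)"
  define a where "a = max 1 (m - \<nu>1)"
  define b where "b = max 1 (max \<nu>1 (m + 1 - \<nu>2))"
  have dim_ge: "enat ((m - a) + (m - b)) \<le> dim_Dprime m V"
    unfolding a_def b_def \<nu>1_def \<nu>2_def by (rule dim_Dprime_ge[OF assms(2-5)])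
  have "int a = max 1 (int m - int \<nu>1)" "int b = max 1 (max (int \<nu>1) (int m - int \<nu>2 + 1))"
    unfolding a_def b_def by linarith+
  moreover have "nat (2 * int m - int b - int a) \<le> (m - a) + (m - b)"
    using assms(1) unfolding a_def by linarith
  ultimately have bound: "enat (nat (2 * int m - max 1 (max (int \<nu>1) (int m - int \<nu>2 + 1))
      - max 1 (int m - int \<nu>1))) \<le> dim_Dprime m V"
    using dim_ge order_trans enat_ord_simps(1) by metis
  have "\<nu>1 = 0 \<and> \<nu>2 = 1" if "dim_Dprime m V = 0"
  proof -
    have "(m - a) + (m - b) = 0" using dim_ge that by (simp add: zero_enat_def)
    moreover have "\<nu>1 < \<nu>2" using assms(5)[of 1 2] by (simp add: \<nu>1_def \<nu>2_def)
    ultimately show ?thesis using assms(1) unfolding a_def b_def by linarith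
  qed
  with bound show ?thesis by (simp add: \<nu>1_def \<nu>2_def)
qed

end
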